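(* Let $(p,q),(r,s)\in\mathbb{Z}^2$ be such that the integers $A=p^2+q^2$ and $B=r^2+s^2$ are relatively prime, and let $\varphi$ be a rotation of $\mathbb{R}^2$ about the origin. Then $\varphi(p,q)\in\mathbb{Z}^2$ and $\varphi(r,s)\in\mathbb{Z}^2$ if and only if $\varphi$ is a rotation by an integer multiple of $\pi/2$. *)

theory Defs
  imports Complex_Main
begin

definition rot :: "real \<Rightarrow> real \<times> real \<Rightarrow> real \<times> real" where
  "rot t = (\<lambda>(x, y). (x * cos t - y * sin t, x * sin t + y * cos t))"

definition is_rotation :: "(real \<times> real \<Rightarrow> real \<times> real) \<Rightarrow> bool" where
  "is_rotation \<phi> \<longleftrightarrow> (\<exists>t. \<phi> = rot t)"

definition int_point :: "real \<times> real \<Rightarrow> bool" where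
  "int_point v \<longleftrightarrow> fst v \<in> \<int> \<and> snd v \<in> \<int>"

end

theory Submission
  imports Defs
begin

text \<open>
  Identify the plane with the Gaussian integers and a rotation with multiplication by
  \<open>c + i s\<close>, where \<open>c = cos t\<close> and \<open>s = sin t\<close>. If \<open>(c + i s)(p + i q)\<close> is a Gaussian integer, then
  so is its product with \<open>p - i q\<close>, namely \<open>(p\<^sup>2 + q\<^sup>2)(c + i s)\<close>. Doing this for both points
  and combining with a Bezout relation for the coprime norms shows that \<open>c\<close> and \<open>s\<close> are integers;
  as \<open>c\<^sup>2 + s\<^sup>2 = 1\<close>, one of them is \<open>\<plusminus>1\<close> and the other \<open>0\<close>, i.e. the angle is a multiple of \<open>\<pi>/2\<close>.
\<close>

lemma rot_cong: "cos a = cos b \<Longrightarrow> sin a = sin b \<Longrightarrow> rot a = rot b"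
  unfolding rot_def by simp

lemma cos_sin_quarter_turn_Ints:
  "cos (of_int k * pi / 2) \<in> \<int> \<and> sin (of_int k * pi / 2) \<in> \<int>"
proof (induction k rule: int_induct[where k = 0])
  case base
  then show ?case by simp
next
  case (step1 i)
  have shift: "of_int (i + 1) * pi / 2 = of_int i * pi / 2 + pi / 2"
    by (simp add: field_simps)
  show ?case unfolding shift using step1 by (simp add: cos_add sin_add)
next
  case (step2 i)
  have shift: "of_int (i - 1) * pi / 2 = of_int i * pi / 2 - pi / 2"
    by (simp add: field_simps)
  show ?case unfolding shift using step2 by (simp add: cos_diff sin_diff)
qed

lemma int_point_rot_quarter_turn:
  "int_point (rot (of_int k * pi / 2) (of_int p, of_int q))"
  using cos_sin_quarter_turn_Ints[of k] by (auto simp: rot_def int_point_def)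

lemma int_point_rot_imp_norm_mult_Ints:
  fixes p q :: int
  assumes "int_point (rot t (of_int p, of_int q))"
  shows "of_int (p\<^sup>2 + q\<^sup>2) * cos t \<in> \<int>" and "of_int (p\<^sup>2 + q\<^sup>2) * sin t \<in> \<int>"
proof -
  define a where "a = of_int p * cos t - of_int q * sin t"
  define b where "b = of_int p * sin t + of_int q * cos t"
  have "a \<in> \<int>" "b \<in> \<int>"
    using assms by (simp_all add: rot_def int_point_def a_def b_def)
  moreover have "of_int (p\<^sup>2 + q\<^sup>2) * cos t = of_int p * a + of_int q * b"
    and "of_int (p\<^sup>2 + q\<^sup>2) * sin t = of_int p * b - of_int q * a"
    by (simp_all add: a_def b_def algebra_simps power2_eq_square)
  ultimately show "of_int (p\<^sup>2 + q\<^sup>2) * cos t \<in> \<int>" "of_int (p\<^sup>2 + q\<^sup>2) * sin t \<in> \<int>"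
    by simp_all
qed

lemma Ints_of_coprime_multiples:
  fixes x :: "'a :: comm_ring_1" and a b :: int
  assumes "coprime a b" and "of_int a * x \<in> \<int>" and "of_int b * x \<in> \<int>"
  shows "x \<in> \<int>"
proof -
  obtain u v where "u * a + v * b = 1"
    using bezout_int[of a b] assms(1) by auto
  then have "x = of_int u * (of_int a * x) + of_int v * (of_int b * x)"
    by (metis (mono_tags) distrib_right mult.assoc mult_1 of_int_1 of_int_add of_int_mult)
  also have "\<dots> \<in> \<int>"
    using assms(2,3) by simp
  finally show ?thesis .
qed

lemma int_sum_squares_eq_1:
  fixes n m :: int
  assumes "n\<^sup>2 + m\<^sup>2 = 1"
  shows "(n = 1 \<and> m = 0) \<or> (n = 0 \<and> m = 1) \<or> (n = -1 \<and> m = 0) \<or> (n = 0 \<and> m = -1)"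
proof -
  have "n\<^sup>2 \<le> 1" "m\<^sup>2 \<le> 1"
    using assms zero_le_power2[of n] zero_le_power2[of m] by linarith+
  then have "\<bar>n\<bar> \<le> 1" "\<bar>m\<bar> \<le> 1"
    by (metis abs_le_square_iff abs_one power_one)+
  then have "n \<in> {-1, 0, 1}" "m \<in> {-1, 0, 1}"
    by auto
  then show ?thesis
    using assms by auto
qed

lemma rot_quarter_turn_if_cos_sin_Ints:
  assumes "cos t \<in> \<int>" and "sin t \<in> \<int>"
  shows "\<exists>k::int. rot t = rot (of_int k * pi / 2)"
proof -
  obtain n m :: int where n: "cos t = of_int n" and m: "sin t = of_int m"
    using assms by (auto elim!: Ints_cases)
  have "of_int (n\<^sup>2 + m\<^sup>2) = (cos t)\<^sup>2 + (sin t)\<^sup>2"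
    by (simp add: n m)
  then have "n\<^sup>2 + m\<^sup>2 = 1"
    by (metis of_int_eq_1_iff sin_cos_squared_add2)
  then consider "n = 1" "m = 0" | "n = 0" "m = 1" | "n = -1" "m = 0" | "n = 0" "m = -1"
    using int_sum_squares_eq_1 by blast
  then show ?thesis
  proof cases
    case 1
    then show ?thesis by (intro exI[of _ 0] rot_cong) (simp_all add: n m)
  next
    case 2
    then show ?thesis by (intro exI[of _ 1] rot_cong) (simp_all add: n m)
  next
    case 3
    then show ?thesis by (intro exI[of _ 2] rot_cong) (simp_all add: n m)
  next
    case 4
    then show ?thesis by (intro exI[of _ "-1"] rot_cong) (simp_all add: n m)
  qed
qed

theorem mainTheorem11:
  fixes p q r s :: int and \<phi> :: "real \<times> real \<Rightarrow> real \<times> real"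
  assumes "coprime (p^2 + q^2) (r^2 + s^2)"
    and "is_rotation \<phi>"
  shows "(int_point (\<phi> (of_int p, of_int q)) \<and> int_point (\<phi> (of_int r, of_int s)))
         \<longleftrightarrow> (\<exists>k::int. \<phi> = rot (of_int k * pi / 2))"
proof
  obtain t where \<phi>: "\<phi> = rot t"
    using assms(2) unfolding is_rotation_def by blast
  assume "int_point (\<phi> (of_int p, of_int q)) \<and> int_point (\<phi> (of_int r, of_int s))"
  then have pq: "int_point (rot t (of_int p, of_int q))"
    and rs: "int_point (rot t (of_int r, of_int s))"
    by (simp_all add: \<phi>)
  have "cos t \<in> \<int>" and "sin t \<in> \<int>"
    using Ints_of_coprime_multiples[OF assms(1)]
      int_point_rot_imp_norm_mult_Ints[OF pq] int_point_rot_imp_norm_mult_Ints[OF rs]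
    by blast+
  then show "\<exists>k::int. \<phi> = rot (of_int k * pi / 2)"
    unfolding \<phi> by (rule rot_quarter_turn_if_cos_sin_Ints)
next
  assume "\<exists>k::int. \<phi> = rot (of_int k * pi / 2)"
  then show "int_point (\<phi> (of_int p, of_int q)) \<and> int_point (\<phi> (of_int r, of_int s))"
    using int_point_rot_quarter_turn by blast
qed

end
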